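(* Let $z\in\mathbb D$, $0<R<1$, $0<L<1$, and suppose $\{z_1,\dots,z_k\}$ is an $L$-chain with respect to $\rho$ of the pseudohyperbolic disk $D(z,R)$. Then $$\frac{R^2}{1-R^2}\cdot\frac{1-L^2}{L^2}\le k\le\frac{(2R+L)^2}{1-R^2}\cdot\frac1{L^2}.$$
   Context: $\mathbb D$ open unit disk, $\rho(z,w)=|z-w|/|1-\bar wz|$, $D(z,R)=\{w\in\mathbb D:\rho(w,z)<R\}$. An $L$-chain of a subset $S$ w.r.t. $\rho$ is a maximal subset of $S$ whose distinct points are at $\rho$-distance $\ge L$. *)

theory Defs
  imports "HOL-Analysis.Analysis"
begin

definition unit_disk :: "complex set" where
  "unit_disk = {z. cmod z < 1}"

definition pseudo_hyp :: "complex \<Rightarrow> complex \<Rightarrow> real" where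
  "pseudo_hyp z w = cmod (z - w) / cmod (1 - cnj w * z)"

definition ph_disk :: "complex \<Rightarrow> real \<Rightarrow> complex set" where
  "ph_disk z R = {w \<in> unit_disk. pseudo_hyp w z < R}"

definition separated :: "real \<Rightarrow> complex set \<Rightarrow> complex set \<Rightarrow> bool" where
  "separated L S C \<longleftrightarrow> C \<subseteq> S \<and>
     (\<forall>a\<in>C. \<forall>b\<in>C. a \<noteq> b \<longrightarrow> pseudo_hyp a b \<ge> L)"

definition L_chain :: "real \<Rightarrow> complex set \<Rightarrow> complex set \<Rightarrow> bool" where
  "L_chain L S C \<longleftrightarrow> separated L S C \<and>
     (\<forall>C'. separated L S C' \<and> C \<subseteq> C' \<longrightarrow> C' = C)"

end

theory Submission
  imports Defs "HOL-Complex_Analysis.Riemann_Mapping"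
begin

text \<open>
  Measure areas with the hyperbolic area element \<open>dA(w) / (1 - |w|\<^sup>2)\<^sup>2\<close>. It is invariant
  under the automorphisms of the disk, so every pseudohyperbolic disk \<open>D(a, r)\<close> has the area
  \<open>\<pi> r\<^sup>2 / (1 - r\<^sup>2)\<close> of \<open>D(0, r)\<close>; the latter is computed with the radial map
  \<open>y \<mapsto> y / \<surd>(1 - |y|\<^sup>2)\<close>, whose Jacobian is exactly the weight and which maps \<open>D(0, r)\<close> onto a
  Euclidean disk. By maximality the disks \<open>D(c, L)\<close>, \<open>c\<close> in the chain, cover \<open>D(z, R)\<close>, which
  gives the lower bound. By separation the disks \<open>D(c, L/2)\<close> are pairwise disjoint, and the
  strengthened triangle inequality \<open>\<rho>(x, y) \<le> (\<rho>(x, w) + \<rho>(w, y)) / (1 + \<rho>(x, w) \<rho>(w, y))\<close>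
  puts them inside \<open>D(z, (R + L/2) / (1 + R L/2))\<close>, which gives the upper bound.
\<close>

section \<open>Pseudohyperbolic distance and disk automorphisms\<close>

lemma pseudo_hyp_commute: "pseudo_hyp x y = pseudo_hyp y x"
proof -
  have "cmod (1 - cnj y * x) = cmod (cnj (1 - cnj y * x))"
    by (rule complex_mod_cnj[symmetric])
  then show ?thesis
    by (simp add: pseudo_hyp_def norm_minus_commute mult.commute)
qed

lemma pseudo_hyp_self [simp]: "pseudo_hyp w w = 0"
  by (simp add: pseudo_hyp_def)

lemma pseudo_hyp_nonneg: "0 \<le> pseudo_hyp x y"
  by (simp add: pseudo_hyp_def)

lemma one_minus_cnj_mult_neq_0:
  assumes "cmod a < 1" "cmod w < 1"
  shows "1 - cnj a * w \<noteq> 0"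
proof -
  have "cmod (cnj a * w) < 1 * 1"
    using assms by (intro norm_mult_less) auto
  then show ?thesis by auto
qed

lemma one_minus_pseudo_hyp_sq:
  assumes "1 - cnj y * x \<noteq> 0"
  shows "1 - (pseudo_hyp x y)\<^sup>2 = (1 - (cmod x)\<^sup>2) * (1 - (cmod y)\<^sup>2) / (cmod (1 - cnj y * x))\<^sup>2"
proof -
  have "(cmod (1 - cnj y * x))\<^sup>2 - (cmod (x - y))\<^sup>2 = (1 - (cmod x)\<^sup>2) * (1 - (cmod y)\<^sup>2)"
    by (simp only: cmod_power2) (simp add: algebra_simps power2_eq_square)
  with assms show ?thesis
    by (simp add: pseudo_hyp_def power_divide field_simps)
qed

lemma pseudo_hyp_eq_norm_Moebius: "pseudo_hyp w a = cmod (Moebius_function 0 a w)"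
  by (simp add: pseudo_hyp_def Moebius_function_simple norm_divide)

lemma Moebius_function_diff:
  assumes "1 - cnj c * x \<noteq> 0" "1 - cnj c * y \<noteq> 0"
  shows "Moebius_function 0 c x - Moebius_function 0 c y
           = (1 - cnj c * c) * (x - y) / ((1 - cnj c * x) * (1 - cnj c * y))"
  using assms by (simp add: Moebius_function_simple field_simps)

lemma one_minus_cnj_Moebius_function_mult:
  assumes "1 - cnj c * x \<noteq> 0" "1 - cnj c * y \<noteq> 0"
  shows "1 - cnj (Moebius_function 0 c y) * Moebius_function 0 c x
           = (1 - cnj c * c) * (1 - cnj y * x) / (cnj (1 - cnj c * y) * (1 - cnj c * x))"
proof -
  have "cnj (1 - cnj c * y) \<noteq> 0"
    using assms(2) by (metis complex_cnj_zero_iff)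
  with assms show ?thesis
    unfolding Moebius_function_simple complex_cnj_divide
    by (simp add: field_simps del: complex_cnj_diff complex_cnj_mult) (simp add: algebra_simps)
qed

lemma pseudo_hyp_Moebius_function:
  assumes "cmod c < 1" "cmod x < 1" "cmod y < 1"
  shows "pseudo_hyp (Moebius_function 0 c x) (Moebius_function 0 c y) = pseudo_hyp x y"
proof -
  have nz: "1 - cnj c * x \<noteq> 0" "1 - cnj c * y \<noteq> 0" "1 - cnj c * c \<noteq> 0"
    using assms one_minus_cnj_mult_neq_0 by blast+
  then show ?thesis
    unfolding pseudo_hyp_def Moebius_function_diff[OF nz(1,2)] one_minus_cnj_Moebius_function_mult[OF nz(1,2)]
    by (simp add: norm_divide norm_mult del: complex_cnj_diff complex_cnj_mult)
qed

text \<open>The addition law of the pseudohyperbolic distance (addition of hyperbolic tangents).\<close>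

definition ph_add :: "real \<Rightarrow> real \<Rightarrow> real" where
  "ph_add p q = (p + q) / (1 + p * q)"

lemma ph_add_nonneg: "0 \<le> p \<Longrightarrow> 0 \<le> q \<Longrightarrow> 0 \<le> ph_add p q"
  by (simp add: ph_add_def)

lemma one_minus_ph_add_sq:
  assumes "0 \<le> p" "0 \<le> q"
  shows "1 - (ph_add p q)\<^sup>2 = (1 - p\<^sup>2) * (1 - q\<^sup>2) / (1 + p * q)\<^sup>2"
proof -
  have "0 < 1 + p * q"
    using assms by (simp add: add_pos_nonneg)
  moreover have "(1 + p * q)\<^sup>2 - (p + q)\<^sup>2 = (1 - p\<^sup>2) * (1 - q\<^sup>2)"
    by (simp add: power2_eq_square algebra_simps)
  ultimately show ?thesis
    by (simp add: ph_add_def power_divide diff_divide_distrib flip: \<open>_ - _ = _\<close>)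
qed

lemma ph_add_le_add:
  assumes "0 \<le> p" "0 \<le> q"
  shows "ph_add p q \<le> p + q"
proof -
  have "(p + q) * 1 \<le> (p + q) * (1 + p * q)"
    using assms by (intro mult_left_mono) auto
  then show ?thesis
    using assms by (simp add: ph_add_def divide_simps add_pos_nonneg)
qed

lemma ph_add_strict_mono:
  assumes "0 \<le> p" "p < s" "0 \<le> q" "q < t" "s < 1" "t < 1"
  shows "ph_add p q < ph_add s t"
proof -
  have "(p + q) * (1 + s * t) < (s + t) * (1 + p * q)"
  proof -
    have "q * t < 1 * 1" "p * s < 1 * 1"
      using assms by (intro mult_strict_mono'; simp)+
    then have "0 < (s - p) * (1 - q * t) + (t - q) * (1 - p * s)"
      using assms by (intro add_pos_pos mult_pos_pos) auto
    then show ?thesis by (simp add: algebra_simps)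
  qed
  then show ?thesis
    using assms by (simp add: ph_add_def divide_simps add_pos_nonneg)
qed

lemma ph_add_less_1:
  assumes "0 \<le> p" "p < 1" "0 \<le> q" "q < 1"
  shows "ph_add p q < 1"
proof -
  have "0 < (1 - p) * (1 - q)" using assms by simp
  then show ?thesis
    using assms by (simp add: ph_add_def divide_simps add_pos_nonneg algebra_simps)
qed

lemma pseudo_hyp_le_ph_add_norm:
  assumes "cmod x < 1" "cmod y < 1"
  shows "pseudo_hyp x y \<le> ph_add (cmod x) (cmod y)"
proof -
  define a b P D where "a = cmod x" and "b = cmod y"
    and "P = (1 - a\<^sup>2) * (1 - b\<^sup>2)" and "D = cmod (1 - cnj y * x)"
  have ab: "0 \<le> a" "a < 1" "0 \<le> b" "b < 1"
    using assms a_def b_def by auto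
  then have P: "0 \<le> P"
    by (simp add: P_def abs_square_le_1)
  have "D \<le> 1 + a * b"
    using norm_triangle_ineq4[of 1 "cnj y * x"] by (simp add: D_def a_def b_def norm_mult mult.commute)
  moreover have "0 < D"
    using one_minus_cnj_mult_neq_0[OF assms(2,1)] by (simp add: D_def)
  ultimately have D2: "0 < D\<^sup>2" "D\<^sup>2 \<le> (1 + a * b)\<^sup>2"
    by (auto intro: power_mono)
  have "(pseudo_hyp x y)\<^sup>2 = 1 - P / D\<^sup>2"
    using one_minus_pseudo_hyp_sq[OF one_minus_cnj_mult_neq_0[OF assms(2,1)]]
    by (simp add: P_def D_def a_def b_def)
  also have "\<dots> \<le> 1 - P / (1 + a * b)\<^sup>2"
    using P D2 by (simp add: frac_le)
  also have "\<dots> = (ph_add a b)\<^sup>2"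
    using one_minus_ph_add_sq[of a b] ab by (simp add: P_def)
  finally have "pseudo_hyp x y \<le> ph_add a b"
    using ph_add_nonneg[OF ab(1,3)] by (rule power2_le_imp_le)
  then show ?thesis
    by (simp only: a_def b_def)
qed

lemma pseudo_hyp_le_ph_add:
  assumes "cmod x < 1" "cmod y < 1" "cmod w < 1"
  shows "pseudo_hyp x y \<le> ph_add (pseudo_hyp x w) (pseudo_hyp w y)"
proof -
  let ?M = "Moebius_function 0 w"
  have "pseudo_hyp x y = pseudo_hyp (?M x) (?M y)"
    using assms by (simp add: pseudo_hyp_Moebius_function)
  also have "\<dots> \<le> ph_add (cmod (?M x)) (cmod (?M y))"
    using assms by (intro pseudo_hyp_le_ph_add_norm Moebius_function_norm_lt_1)
  also have "\<dots> = ph_add (pseudo_hyp x w) (pseudo_hyp w y)"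
    unfolding pseudo_hyp_commute[of w y] unfolding pseudo_hyp_eq_norm_Moebius ..
  finally show ?thesis .
qed

lemma pseudo_hyp_triangle:
  assumes "cmod x < 1" "cmod y < 1" "cmod w < 1"
  shows "pseudo_hyp x y \<le> pseudo_hyp x w + pseudo_hyp w y"
  using pseudo_hyp_le_ph_add[OF assms] ph_add_le_add[OF pseudo_hyp_nonneg[of x w] pseudo_hyp_nonneg[of w y]]
  by linarith

lemma ph_disk_subset_ph_disk:
  assumes "c \<in> ph_disk z R" "cmod z < 1" "R < 1" "0 \<le> t" "t < 1"
  shows "ph_disk c t \<subseteq> ph_disk z (ph_add t R)"
proof
  fix w assume w: "w \<in> ph_disk c t"
  have "pseudo_hyp w z \<le> ph_add (pseudo_hyp w c) (pseudo_hyp c z)"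
    using assms w by (intro pseudo_hyp_le_ph_add) (auto simp: ph_disk_def unit_disk_def)
  also have "\<dots> < ph_add t R"
    using assms w by (intro ph_add_strict_mono pseudo_hyp_nonneg) (auto simp: ph_disk_def)
  finally show "w \<in> ph_disk z (ph_add t R)"
    using w by (simp add: ph_disk_def)
qed

lemma Moebius_function_image_ball:
  assumes "cmod a < 1" "r \<le> 1"
  shows "Moebius_function 0 (- a) ` ball 0 r = ph_disk a r"
proof (intro equalityI subsetI)
  fix v assume "v \<in> Moebius_function 0 (- a) ` ball 0 r"
  then obtain u where u: "cmod u < r" and v: "v = Moebius_function 0 (- a) u"
    by auto
  have "cmod u < 1" using u assms by simp
  then have "cmod v < 1" and "Moebius_function 0 a v = u"
    using assms v by (simp_all add: Moebius_function_norm_lt_1 Moebius_function_compose)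
  with u show "v \<in> ph_disk a r"
    by (simp add: ph_disk_def unit_disk_def pseudo_hyp_eq_norm_Moebius)
next
  fix v assume v: "v \<in> ph_disk a r"
  then have "cmod v < 1" "cmod (Moebius_function 0 a v) < r"
    by (auto simp: ph_disk_def unit_disk_def pseudo_hyp_eq_norm_Moebius)
  moreover have "Moebius_function 0 (- a) (Moebius_function 0 a v) = v"
    using \<open>cmod v < 1\<close> assms by (intro Moebius_function_compose) auto
  ultimately show "v \<in> Moebius_function 0 (- a) ` ball 0 r"
    by (metis image_eqI mem_ball_0)
qed

lemma ph_disk_in_borel [measurable]: "ph_disk a r \<in> sets borel"
  unfolding ph_disk_def unit_disk_def pseudo_hyp_def by measurable

section \<open>The hyperbolic area\<close>

definition vec_of_complex :: "complex \<Rightarrow> real^2" where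
  "vec_of_complex z = vector [Re z, Im z]"

definition complex_of_vec :: "real^2 \<Rightarrow> complex" where
  "complex_of_vec x = Complex (x$1) (x$2)"

lemma complex_of_vec_of_complex [simp]: "complex_of_vec (vec_of_complex z) = z"
  by (simp add: vec_of_complex_def complex_of_vec_def complex_eq_iff)

lemma vec_of_complex_of_vec [simp]: "vec_of_complex (complex_of_vec x) = x"
  by (simp add: vec_of_complex_def complex_of_vec_def vec_eq_iff forall_2)

lemma norm_vec_of_complex [simp]: "norm (vec_of_complex z) = cmod z"
  by (simp add: norm_vec_def L2_set_def sum_2 vec_of_complex_def cmod_def)

lemma norm_complex_of_vec [simp]: "cmod (complex_of_vec x) = norm x"
  by (metis norm_vec_of_complex vec_of_complex_of_vec)

lemma image_vec_of_complex: "vec_of_complex ` A = complex_of_vec -` A"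
  by (auto simp: image_iff) (metis vec_of_complex_of_vec)

lemma image_complex_of_vec: "complex_of_vec ` A = vec_of_complex -` A"
  by (auto simp: image_iff) (metis complex_of_vec_of_complex)

lemma bounded_linear_vec_of_complex: "bounded_linear vec_of_complex"
  by (auto intro!: linearI simp: linear_conv_bounded_linear[symmetric] vec_of_complex_def vec_eq_iff forall_2)

lemma bounded_linear_complex_of_vec: "bounded_linear complex_of_vec"
  by (auto intro!: linearI simp: linear_conv_bounded_linear[symmetric] complex_of_vec_def complex_eq_iff)

lemma has_field_derivative_imp_has_derivative_vec:
  assumes "(f has_field_derivative d) (at (complex_of_vec x))"
  shows "((\<lambda>x. vec_of_complex (f (complex_of_vec x))) has_derivative
           (\<lambda>v. vec_of_complex (d * complex_of_vec v))) (at x)"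
proof -
  have "((\<lambda>x. f (complex_of_vec x)) has_derivative (\<lambda>v. d * complex_of_vec v)) (at x)"
    using has_derivative_compose[OF bounded_linear_imp_has_derivative[OF bounded_linear_complex_of_vec]
        assms[unfolded has_field_derivative_def]] .
  from has_derivative_compose[OF this bounded_linear_imp_has_derivative[OF bounded_linear_vec_of_complex]]
  show ?thesis .
qed

lemma det_complex_mult: "det (matrix (\<lambda>v. vec_of_complex (d * complex_of_vec v))) = (cmod d)\<^sup>2"
  unfolding cmod_power2
  by (simp add: det_2 matrix_def vec_of_complex_def complex_of_vec_def axis_def power2_eq_square)

lemma Moebius_function_has_field_derivative:
  assumes "1 - cnj b * u \<noteq> 0"
  shows "(Moebius_function 0 b has_field_derivative (1 - cnj b * b) / (1 - cnj b * u)\<^sup>2) (at u)"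
proof -
  have "((\<lambda>u. (u - b) / (1 - cnj b * u)) has_field_derivative
      ((1 - 0) * (1 - cnj b * u) - (u - b) * (0 - cnj b * 1)) / ((1 - cnj b * u) * (1 - cnj b * u))) (at u)"
    by (intro DERIV_divide DERIV_diff DERIV_cmult DERIV_ident DERIV_const assms)
  then show ?thesis
    by (simp add: Moebius_function_simple[abs_def] power2_eq_square algebra_simps)
qed

lemma has_integral_iff_vec1:
  fixes F :: "'a::euclidean_space \<Rightarrow> real"
  assumes "\<And>x. x \<in> X \<Longrightarrow> 0 \<le> F x"
  shows "((\<lambda>x. vec (F x) :: real^1) absolutely_integrable_on X
          \<and> integral X (\<lambda>x. vec (F x) :: real^1) = vec b) \<longleftrightarrow> (F has_integral b) X"
  using assms unfolding absolutely_integrable_on_1_iff integral_on_1_eq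
  by (auto simp: absolutely_integrable_on_iff_nonneg has_integral_iff vec_eq_iff)

lemma has_integral_nonneg_change_of_variables:
  fixes f :: "real^'n::{finite,wellorder} \<Rightarrow> real" and g :: "real^'n::_ \<Rightarrow> real^'n::_"
  assumes S: "S \<in> sets lebesgue"
    and der_g: "\<And>x. x \<in> S \<Longrightarrow> (g has_derivative g' x) (at x within S)"
    and inj: "inj_on g S"
    and f0: "\<And>y. y \<in> g ` S \<Longrightarrow> 0 \<le> f y"
  shows "((\<lambda>x. \<bar>det (matrix (g' x))\<bar> * f (g x)) has_integral b) S \<longleftrightarrow> (f has_integral b) (g ` S)"
proof -
  let ?D = "\<lambda>x. \<bar>det (matrix (g' x))\<bar> * f (g x)"
  have D0: "0 \<le> ?D x" if "x \<in> S" for x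
    using f0 that by simp
  have eq: "(\<lambda>x. \<bar>det (matrix (g' x))\<bar> *\<^sub>R vec (f (g x))) = (\<lambda>x. vec (?D x) :: real^1)"
    by (auto simp: vec_eq_iff)
  show ?thesis
    using has_absolute_integral_change_of_variables [OF S der_g inj, of "\<lambda>y. vec (f y) :: real^1" "vec b"]
    unfolding eq by (simp add: has_integral_iff_vec1[OF D0] has_integral_iff_vec1[OF f0])
qed

definition hyp_weight :: "'a::real_normed_vector \<Rightarrow> real" where
  "hyp_weight x = 1 / (1 - (norm x)\<^sup>2)\<^sup>2"

lemma hyp_weight_nonneg: "0 \<le> hyp_weight x"
  by (simp add: hyp_weight_def)

lemma hyp_weight_vec_of_complex [simp]: "hyp_weight (vec_of_complex z) = hyp_weight z"
  by (simp add: hyp_weight_def)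

lemma hyp_weight_complex_of_vec [simp]: "hyp_weight (complex_of_vec x) = hyp_weight x"
  by (simp add: hyp_weight_def)

text \<open>
  The Jacobian of the radial stretch is the hyperbolic weight, so it turns hyperbolic area on a
  centred disk into Lebesgue measure on a (larger) Euclidean disk.
\<close>

definition radial_stretch :: "'a::real_inner \<Rightarrow> 'a" where
  "radial_stretch y = (1 / sqrt (1 - y \<bullet> y)) *\<^sub>R y"

definition radial_stretch_deriv :: "'a::real_inner \<Rightarrow> 'a \<Rightarrow> 'a" where
  "radial_stretch_deriv y v = (1 / sqrt (1 - y \<bullet> y)) *\<^sub>R v + ((y \<bullet> v) / sqrt (1 - y \<bullet> y) ^ 3) *\<^sub>R y"

lemma has_derivative_radial_stretch:
  assumes "norm y < 1"
  shows "(radial_stretch has_derivative radial_stretch_deriv y) (at y)"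
proof -
  have p: "0 < 1 - y \<bullet> y"
    using assms by (simp add: dot_square_norm abs_square_less_1)
  show ?thesis
    unfolding radial_stretch_def[abs_def] radial_stretch_deriv_def[abs_def]
    by (rule derivative_eq_intros refl | use p in force)+
       (use p in \<open>simp add: field_simps power3_eq_cube inner_commute\<close>)
qed

lemma det_radial_stretch_deriv:
  fixes y :: "real^2"
  assumes "norm y < 1"
  shows "\<bar>det (matrix (radial_stretch_deriv y))\<bar> = hyp_weight y"
proof -
  define s where "s = sqrt (1 - y \<bullet> y)"
  have yy: "y \<bullet> y = (y$1)\<^sup>2 + (y$2)\<^sup>2"
    by (simp add: inner_vec_def sum_2 power2_eq_square)
  have p: "0 < 1 - y \<bullet> y"
    using assms by (simp add: dot_square_norm abs_square_less_1)
  then have s0: "0 < s" and s2: "s\<^sup>2 = 1 - (y$1)\<^sup>2 - (y$2)\<^sup>2"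
    by (simp_all add: s_def yy)
  have "matrix (radial_stretch_deriv y) $ i $ j = (if i = j then 1 / s else 0) + y $ j * y $ i / s ^ 3"
    for i j
    by (simp add: radial_stretch_deriv_def s_def matrix_def inner_axis; simp add: axis_def)
  then have "det (matrix (radial_stretch_deriv y))
      = (1/s + (y$1)\<^sup>2 / s^3) * (1/s + (y$2)\<^sup>2 / s^3) - (y$1 * y$2 / s^3)\<^sup>2"
    by (simp add: det_2 power2_eq_square)
  also have "\<dots> = (s\<^sup>2 + (y$1)\<^sup>2 + (y$2)\<^sup>2) / (s\<^sup>2)\<^sup>2"
    using s0 by (simp add: field_simps power2_eq_square power3_eq_cube power4_eq_xxxx)
  also have "\<dots> = 1 / (s\<^sup>2)\<^sup>2"
    using s2 by simp
  finally show ?thesis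
    using p by (simp add: s_def hyp_weight_def power2_norm_eq_inner)
qed

definition radial_shrink :: "'a::real_inner \<Rightarrow> 'a" where
  "radial_shrink x = (1 / sqrt (1 + x \<bullet> x)) *\<^sub>R x"

lemma inner_radial_stretch:
  "y \<bullet> y < 1 \<Longrightarrow> radial_stretch y \<bullet> radial_stretch y = (y \<bullet> y) / (1 - y \<bullet> y)"
  by (simp add: radial_stretch_def power2_eq_square[symmetric])

lemma inner_radial_shrink:
  "radial_shrink x \<bullet> radial_shrink x = (x \<bullet> x) / (1 + x \<bullet> x)"
  by (simp add: radial_shrink_def power2_eq_square[symmetric] add_nonneg_nonneg)

lemma radial_shrink_stretch:
  assumes "norm y < 1" shows "radial_shrink (radial_stretch y) = y"
proof -
  have y: "y \<bullet> y < 1" using assms by (simp add: dot_square_norm abs_square_less_1)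
  then have "1 + radial_stretch y \<bullet> radial_stretch y = 1 / (1 - y \<bullet> y)"
    by (simp add: inner_radial_stretch field_simps)
  with y show ?thesis
    by (simp add: radial_shrink_def radial_stretch_def real_sqrt_divide)
qed

lemma radial_stretch_shrink: "radial_stretch (radial_shrink x) = x"
proof -
  have p: "0 < 1 + x \<bullet> x" by (simp add: add_pos_nonneg)
  then have "1 - radial_shrink x \<bullet> radial_shrink x = 1 / (1 + x \<bullet> x)"
    by (simp add: inner_radial_shrink field_simps)
  with p show ?thesis
    by (simp add: radial_shrink_def radial_stretch_def real_sqrt_divide)
qed

lemma norm_radial_stretch_less_iff:
  fixes y :: "'a::real_inner"
  assumes "norm y < 1" "0 \<le> r" "r < 1"
  shows "norm (radial_stretch y) < r / sqrt (1 - r\<^sup>2) \<longleftrightarrow> norm y < r"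
proof -
  have y: "y \<bullet> y < 1" and r: "r\<^sup>2 < 1"
    using assms by (simp_all add: dot_square_norm abs_square_less_1)
  have "norm (radial_stretch y) < r / sqrt (1 - r\<^sup>2)
      \<longleftrightarrow> sqrt ((y \<bullet> y) / (1 - y \<bullet> y)) < sqrt (r\<^sup>2 / (1 - r\<^sup>2))"
    using y assms(2) by (simp add: norm_eq_sqrt_inner inner_radial_stretch real_sqrt_divide)
  also have "\<dots> \<longleftrightarrow> y \<bullet> y < r\<^sup>2"
    using y r by (simp add: divide_simps) (simp add: algebra_simps)
  also have "\<dots> \<longleftrightarrow> norm y < r"
    using assms(2) by (metis norm_eq_sqrt_inner real_sqrt_abs real_sqrt_less_iff abs_of_nonneg)
  finally show ?thesis .
qed

lemma radial_stretch_image_ball: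
  fixes r :: real
  assumes "0 \<le> r" "r < 1"
  shows "radial_stretch ` ball (0::'a::real_inner) r = ball 0 (r / sqrt (1 - r\<^sup>2))"
proof (intro equalityI subsetI)
  fix x assume "x \<in> radial_stretch ` ball (0::'a) r"
  with assms show "x \<in> ball 0 (r / sqrt (1 - r\<^sup>2))"
    by (auto simp: norm_radial_stretch_less_iff)
next
  fix x :: 'a assume x: "x \<in> ball 0 (r / sqrt (1 - r\<^sup>2))"
  have "radial_shrink x \<bullet> radial_shrink x < 1"
    by (simp add: inner_radial_shrink add_pos_nonneg)
  then have "norm (radial_shrink x) < 1"
    by (simp add: norm_eq_sqrt_inner)
  moreover from this x assms have "norm (radial_shrink x) < r"
    by (simp add: norm_radial_stretch_less_iff[symmetric] radial_stretch_shrink)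
  ultimately show "x \<in> radial_stretch ` ball 0 r"
    by (metis image_eqI mem_ball_0 radial_stretch_shrink)
qed

lemma hyp_weight_has_integral_ball:
  fixes r :: real
  assumes "0 \<le> r" "r < 1"
  shows "(hyp_weight has_integral pi * r\<^sup>2 / (1 - r\<^sup>2)) (ball (0::real^2) r)"
proof -
  have der: "(radial_stretch has_derivative radial_stretch_deriv y) (at y within ball 0 r)"
    if "y \<in> ball 0 r" for y :: "real^2"
    using that assms by (intro has_derivative_at_withinI[OF has_derivative_radial_stretch]) simp
  have inj: "inj_on radial_stretch (ball (0::real^2) r)"
    using assms by (intro inj_on_inverseI[where g = radial_shrink] radial_shrink_stretch) simp
  have "r\<^sup>2 < 1"
    using assms by (simp add: abs_square_less_1)
  then have "radial_stretch ` ball (0::real^2) r \<in> lmeasurable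
      \<and> measure lebesgue (radial_stretch ` ball (0::real^2) r) = pi * r\<^sup>2 / (1 - r\<^sup>2)"
    using assms by (simp add: radial_stretch_image_ball circle_area power_divide)
  then have "((\<lambda>y. \<bar>det (matrix (radial_stretch_deriv y))\<bar>) has_integral pi * r\<^sup>2 / (1 - r\<^sup>2))
               (ball (0::real^2) r)"
    using has_measure_differentiable_image[OF fmeasurableD[OF lmeasurable_ball] der inj,
        of "pi * r\<^sup>2 / (1 - r\<^sup>2)"] by simp
  then show ?thesis
    by (rule has_integral_eq[rotated]) (use assms in \<open>simp add: det_radial_stretch_deriv\<close>)
qed

lemma hyp_weight_Moebius_function:
  assumes "cmod b < 1" "cmod u < 1"
  shows "(cmod ((1 - cnj b * b) / (1 - cnj b * u)\<^sup>2))\<^sup>2 * hyp_weight (Moebius_function 0 b u)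
         = hyp_weight u"
proof -
  define A U E where "A = 1 - (cmod b)\<^sup>2" and "U = 1 - (cmod u)\<^sup>2" and "E = cmod (1 - cnj b * u)"
  have A: "0 < A" and U: "0 < U"
    using assms by (simp_all add: A_def U_def abs_square_less_1)
  have E: "0 < E"
    using one_minus_cnj_mult_neq_0[OF assms] by (simp add: E_def)
  have "1 - cnj b * b = complex_of_real A"
    using complex_norm_square[of b] by (simp add: A_def mult.commute)
  then have "cmod ((1 - cnj b * b) / (1 - cnj b * u)\<^sup>2) = A / E\<^sup>2"
    using A by (simp add: E_def norm_divide norm_power)
  moreover have "1 - (cmod (Moebius_function 0 b u))\<^sup>2 = U * A / E\<^sup>2"
    using one_minus_pseudo_hyp_sq[OF one_minus_cnj_mult_neq_0[OF assms]]
    by (simp add: pseudo_hyp_eq_norm_Moebius U_def A_def E_def)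
  ultimately show ?thesis
    using A U E by (simp add: hyp_weight_def U_def[symmetric] power_divide power_mult_distrib)
qed

lemma hyp_weight_has_integral_ph_disk:
  assumes a: "cmod a < 1" and r: "0 \<le> r" "r < 1"
  shows "(hyp_weight has_integral pi * r\<^sup>2 / (1 - r\<^sup>2)) (vec_of_complex ` ph_disk a r)"
proof -
  let ?M = "Moebius_function 0 (- a)"
  let ?G = "\<lambda>x. vec_of_complex (?M (complex_of_vec x))"
  let ?G' = "\<lambda>x v. vec_of_complex ((1 - cnj (- a) * - a) / (1 - cnj (- a) * complex_of_vec x)\<^sup>2
                                   * complex_of_vec v)"
  let ?J = "\<lambda>x. \<bar>det (matrix (?G' x))\<bar> * hyp_weight (?G x)"
  have der: "(?G has_derivative ?G' x) (at x within ball 0 r)" if "x \<in> ball 0 r" for x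
    using that a r
    by (intro has_derivative_at_withinI[OF has_field_derivative_imp_has_derivative_vec]
          Moebius_function_has_field_derivative one_minus_cnj_mult_neq_0) auto
  have inj: "inj_on ?G (ball 0 r)"
  proof (rule inj_on_inverseI)
    fix x :: "real^2" assume "x \<in> ball 0 r"
    with a r show "vec_of_complex (Moebius_function 0 a (complex_of_vec (?G x))) = x"
      by (simp add: Moebius_function_compose)
  qed
  have "?G ` ball 0 r = vec_of_complex ` ?M ` complex_of_vec ` ball 0 r"
    by (simp only: image_image)
  also have "complex_of_vec ` ball 0 r = ball 0 r"
    by (auto simp: image_complex_of_vec)
  finally have img: "?G ` ball 0 r = vec_of_complex ` ph_disk a r"
    using a r by (simp add: Moebius_function_image_ball)
  have "?J x = hyp_weight x" if "x \<in> ball 0 r" for x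
  proof -
    have "cmod (complex_of_vec x) < 1" "cmod (- a) < 1"
      using that a r by simp_all
    from hyp_weight_Moebius_function[OF this(2,1)] show ?thesis
      by (simp only: det_complex_mult abs_power2 hyp_weight_vec_of_complex hyp_weight_complex_of_vec)
  qed
  then have "(?J has_integral pi * r\<^sup>2 / (1 - r\<^sup>2)) (ball 0 r)"
    using hyp_weight_has_integral_ball[OF r] has_integral_cong[of "ball 0 r" ?J hyp_weight] by simp
  moreover have "(?J has_integral pi * r\<^sup>2 / (1 - r\<^sup>2)) (ball 0 r)
      \<longleftrightarrow> (hyp_weight has_integral pi * r\<^sup>2 / (1 - r\<^sup>2)) (?G ` ball 0 r)"
    by (rule has_integral_nonneg_change_of_variables[OF fmeasurableD[OF lmeasurable_ball] der inj
          hyp_weight_nonneg])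
  ultimately show ?thesis
    unfolding img by blast
qed

text \<open>
  Change of variables is only available on \<open>real^n\<close>, so the hyperbolic area is built on
  \<open>real^2\<close> and transported to the complex plane.
\<close>

definition hyp_area :: "complex measure" where
  "hyp_area = distr (density lborel (\<lambda>x::real^2. ennreal (hyp_weight x))) borel complex_of_vec"

lemma sets_hyp_area [simp]: "sets hyp_area = sets borel"
  by (simp add: hyp_area_def)

definition hyp_disk_area :: "real \<Rightarrow> real" where
  "hyp_disk_area r = pi * (r\<^sup>2 / (1 - r\<^sup>2))"

lemma hyp_disk_area_nonneg: "0 \<le> r \<Longrightarrow> r < 1 \<Longrightarrow> 0 \<le> hyp_disk_area r"
  by (simp add: hyp_disk_area_def abs_square_le_1)

lemma hyp_disk_area_ph_add:
  assumes "0 \<le> p" "p < 1" "0 \<le> q" "q < 1"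
  shows "hyp_disk_area (ph_add p q) = pi * ((p + q)\<^sup>2 / ((1 - p\<^sup>2) * (1 - q\<^sup>2)))"
proof -
  have "0 < 1 + p * q"
    using assms by (simp add: add_pos_nonneg)
  with assms one_minus_ph_add_sq[of p q] show ?thesis
    by (simp add: hyp_disk_area_def ph_add_def power_divide)
qed

lemma emeasure_hyp_area_ph_disk:
  assumes "cmod a < 1" "0 \<le> r" "r < 1"
  shows "emeasure hyp_area (ph_disk a r) = ennreal (hyp_disk_area r)"
proof -
  have meas: "complex_of_vec \<in> borel_measurable borel"
    by (intro borel_measurable_continuous_onI linear_continuous_on bounded_linear_complex_of_vec)
  have [measurable]: "(\<lambda>x::real^2. ennreal (hyp_weight x)) \<in> borel_measurable borel"
    unfolding hyp_weight_def by measurable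
  have [measurable]: "vec_of_complex ` ph_disk a r \<in> sets borel"
    using measurable_sets_borel[OF meas ph_disk_in_borel] by (simp add: image_vec_of_complex)
  have "emeasure hyp_area (ph_disk a r)
      = emeasure (density lborel (\<lambda>x. ennreal (hyp_weight x))) (vec_of_complex ` ph_disk a r)"
    using meas by (simp add: hyp_area_def emeasure_distr image_vec_of_complex)
  also have "\<dots> = (\<integral>\<^sup>+x. ennreal (hyp_weight x) * indicator (vec_of_complex ` ph_disk a r) x \<partial>lborel)"
    by (rule emeasure_density) measurable
  also have "\<dots> = ennreal (hyp_disk_area r)"
    unfolding hyp_disk_area_def times_divide_eq_right
    using assms by (intro nn_integral_has_integral_lebesgue' hyp_weight_has_integral_ph_disk hyp_weight_nonneg)
  finally show ?thesis .
qed

section \<open>Counting by area\<close>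

lemma emeasure_le_card_mult_of_cover:
  assumes "finite C" "S \<subseteq> (\<Union>c\<in>C. D c)" "D ` C \<subseteq> sets M"
    and "\<And>c. c \<in> C \<Longrightarrow> emeasure M (D c) = a"
  shows "emeasure M S \<le> of_nat (card C) * a"
proof -
  have "emeasure M S \<le> emeasure M (\<Union>c\<in>C. D c)"
    using assms by (intro emeasure_mono) auto
  also have "\<dots> \<le> (\<Sum>c\<in>C. emeasure M (D c))"
    using assms by (intro emeasure_subadditive_finite)
  also have "\<dots> = of_nat (card C) * a"
    using assms by simp
  finally show ?thesis .
qed

lemma card_mult_le_emeasure_of_disjoint:
  assumes "finite C" "disjoint_family_on D C" "(\<Union>c\<in>C. D c) \<subseteq> S" "S \<in> sets M"
    and "D ` C \<subseteq> sets M" "\<And>c. c \<in> C \<Longrightarrow> emeasure M (D c) = a"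
  shows "of_nat (card C) * a \<le> emeasure M S"
proof -
  have "of_nat (card C) * a = (\<Sum>c\<in>C. emeasure M (D c))"
    using assms by simp
  also have "\<dots> = emeasure M (\<Union>c\<in>C. D c)"
    using assms by (intro sum_emeasure)
  also have "\<dots> \<le> emeasure M S"
    using assms by (intro emeasure_mono)
  finally show ?thesis .
qed

lemma of_nat_mult_ennreal: "0 \<le> a \<Longrightarrow> of_nat n * ennreal a = ennreal (real n * a)"
  by (simp add: ennreal_of_nat_eq_real_of_nat ennreal_mult')

lemma L_chain_ph_disks_cover:
  assumes chain: "L_chain L S C" and S: "S \<subseteq> unit_disk" and L: "0 < L"
  shows "S \<subseteq> (\<Union>c\<in>C. ph_disk c L)"
proof
  fix w assume w: "w \<in> S"
  show "w \<in> (\<Union>c\<in>C. ph_disk c L)"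
  proof (rule ccontr)
    assume "w \<notin> (\<Union>c\<in>C. ph_disk c L)"
    with w S have far: "L \<le> pseudo_hyp w c" if "c \<in> C" for c
      using that by (force simp: ph_disk_def)
    with L have "w \<notin> C" by force
    have "separated L S (insert w C)"
      using chain w far unfolding L_chain_def separated_def
      by (auto simp: pseudo_hyp_commute)
    with chain have "insert w C = C"
      unfolding L_chain_def by blast
    with \<open>w \<notin> C\<close> show False by blast
  qed
qed

lemma separated_disjoint_ph_disks:
  assumes "separated L S C" "S \<subseteq> unit_disk"
  shows "disjoint_family_on (\<lambda>c. ph_disk c (L / 2)) C"
  unfolding disjoint_family_on_def
proof (intro ballI impI, rule ccontr)
  fix a b assume ab: "a \<in> C" "b \<in> C" "a \<noteq> b"
    and "ph_disk a (L / 2) \<inter> ph_disk b (L / 2) \<noteq> {}"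
  then obtain w where w: "w \<in> unit_disk" "pseudo_hyp w a < L / 2" "pseudo_hyp w b < L / 2"
    by (auto simp: ph_disk_def)
  have "a \<in> unit_disk" "b \<in> unit_disk"
    using assms ab unfolding separated_def by auto
  then have "pseudo_hyp a b \<le> pseudo_hyp a w + pseudo_hyp w b"
    using w by (intro pseudo_hyp_triangle) (auto simp: unit_disk_def)
  also have "\<dots> < L"
    using w by (simp add: pseudo_hyp_commute[of a w])
  finally show False
    using assms ab unfolding separated_def by fastforce
qed

lemma L_chain_hyp_disk_area_le:
  assumes z: "cmod z < 1" and R: "0 \<le> R" "R < 1" and L: "0 < L" "L < 1"
    and chain: "L_chain L (ph_disk z R) C" and fin: "finite C"
  shows "hyp_disk_area R \<le> card C * hyp_disk_area L"
proof -
  have disk: "ph_disk z R \<subseteq> unit_disk"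
    by (auto simp: ph_disk_def)
  then have "cmod c < 1" if "c \<in> C" for c
    using that chain by (auto simp: L_chain_def separated_def unit_disk_def)
  then have "emeasure hyp_area (ph_disk z R) \<le> of_nat (card C) * ennreal (hyp_disk_area L)"
    using L by (intro emeasure_le_card_mult_of_cover[OF fin L_chain_ph_disks_cover[OF chain disk L(1)]]
        emeasure_hyp_area_ph_disk) auto
  moreover have "0 \<le> card C * hyp_disk_area L"
    using L by (simp add: hyp_disk_area_nonneg)
  ultimately show ?thesis
    using z R L by (simp add: emeasure_hyp_area_ph_disk of_nat_mult_ennreal hyp_disk_area_nonneg)
qed

lemma separated_card_hyp_disk_area_le:
  assumes z: "cmod z < 1" and R: "0 \<le> R" "R < 1" and L: "0 \<le> L" "L < 2"
    and sep: "separated L (ph_disk z R) C" and fin: "finite C"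
  shows "card C * hyp_disk_area (L / 2) \<le> hyp_disk_area (ph_add (L / 2) R)"
proof -
  let ?S = "ph_add (L / 2) R"
  have S: "0 \<le> ?S" "?S < 1"
    using R L by (simp_all add: ph_add_nonneg ph_add_less_1)
  have disk: "ph_disk z R \<subseteq> unit_disk"
    by (auto simp: ph_disk_def)
  have C: "c \<in> ph_disk z R" "cmod c < 1" if "c \<in> C" for c
    using that sep disk by (auto simp: separated_def unit_disk_def)
  then have "ph_disk c (L / 2) \<subseteq> ph_disk z ?S" if "c \<in> C" for c
    using that z R L by (intro ph_disk_subset_ph_disk) auto
  then have "(\<Union>c\<in>C. ph_disk c (L / 2)) \<subseteq> ph_disk z ?S"
    by blast
  then have "of_nat (card C) * ennreal (hyp_disk_area (L / 2)) \<le> emeasure hyp_area (ph_disk z ?S)"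
    using C L by (intro card_mult_le_emeasure_of_disjoint[OF fin separated_disjoint_ph_disks[OF sep disk]]
        emeasure_hyp_area_ph_disk) auto
  then show ?thesis
    using z L S by (simp add: emeasure_hyp_area_ph_disk of_nat_mult_ennreal hyp_disk_area_nonneg)
qed

lemma card_lower_bound_arith:
  fixes R L k :: real
  assumes "0 < L" "L < 1" "hyp_disk_area R \<le> k * hyp_disk_area L"
  shows "R\<^sup>2 / (1 - R\<^sup>2) * ((1 - L\<^sup>2) / L\<^sup>2) \<le> k"
proof -
  have L2: "0 < L\<^sup>2" "0 < 1 - L\<^sup>2"
    using assms by (simp_all add: abs_square_less_1)
  have "pi * (R\<^sup>2 / (1 - R\<^sup>2)) \<le> pi * (k * (L\<^sup>2 / (1 - L\<^sup>2)))"
    using assms(3) by (simp only: hyp_disk_area_def mult.left_commute)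
  then have "R\<^sup>2 / (1 - R\<^sup>2) \<le> k * (L\<^sup>2 / (1 - L\<^sup>2))"
    by (rule mult_left_le_imp_le) simp
  then have "R\<^sup>2 / (1 - R\<^sup>2) * ((1 - L\<^sup>2) / L\<^sup>2) \<le> k * (L\<^sup>2 / (1 - L\<^sup>2)) * ((1 - L\<^sup>2) / L\<^sup>2)"
    using L2 by (intro mult_right_mono) simp_all
  also have "\<dots> = k"
    using L2 by simp
  finally show ?thesis .
qed

lemma card_upper_bound_arith:
  fixes R L k :: real
  assumes "0 \<le> R" "R < 1" "0 < L" "L < 1"
    and "k * hyp_disk_area (L / 2) \<le> hyp_disk_area (ph_add (L / 2) R)"
  shows "k \<le> (2 * R + L)\<^sup>2 / (1 - R\<^sup>2) * (1 / L\<^sup>2)"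
proof -
  define t where "t = L / 2"
  have t: "0 \<le> t" "t < 1" "0 < 1 - t\<^sup>2" and R: "0 < 1 - R\<^sup>2" "0 < L\<^sup>2"
    using assms by (simp_all add: t_def abs_square_less_1)
  have "pi * (k * (t\<^sup>2 / (1 - t\<^sup>2))) \<le> pi * ((t + R)\<^sup>2 / ((1 - t\<^sup>2) * (1 - R\<^sup>2)))"
    using assms(5) t assms(1,2)
    by (simp only: t_def[symmetric] hyp_disk_area_ph_add) (simp only: hyp_disk_area_def mult.left_commute)
  then have ineq: "k * (t\<^sup>2 / (1 - t\<^sup>2)) \<le> (t + R)\<^sup>2 / ((1 - t\<^sup>2) * (1 - R\<^sup>2))"
    by (rule mult_left_le_imp_le) simp
  have "L\<^sup>2 = 4 * t\<^sup>2"
    by (simp add: t_def power2_eq_square)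
  then have "k * L\<^sup>2 = 4 * (k * (t\<^sup>2 / (1 - t\<^sup>2)) * (1 - t\<^sup>2))"
    using t(3) by simp
  also have "\<dots> \<le> 4 * ((t + R)\<^sup>2 / ((1 - t\<^sup>2) * (1 - R\<^sup>2)) * (1 - t\<^sup>2))"
    using ineq t(3) by (intro mult_left_mono mult_right_mono) simp_all
  also have "\<dots> = (2 * R + L)\<^sup>2 / (1 - R\<^sup>2)"
  proof -
    have "(2 * R + L)\<^sup>2 = 4 * (t + R)\<^sup>2"
      by (simp add: t_def power2_eq_square algebra_simps)
    with t(3) show ?thesis by simp
  qed
  finally have "k * L\<^sup>2 \<le> (2 * R + L)\<^sup>2 / (1 - R\<^sup>2)" .
  then have "k \<le> (2 * R + L)\<^sup>2 / (1 - R\<^sup>2) / L\<^sup>2"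
    using R(2) by (simp only: pos_le_divide_eq)
  then show ?thesis
    by simp
qed

theorem lemma4p2:
  fixes z :: complex and R L :: real and C :: "complex set" and k :: nat
  assumes "z \<in> unit_disk"
    and "0 < R" and "R < 1"
    and "0 < L" and "L < 1"
    and "L_chain L (ph_disk z R) C"
    and "finite C" and "card C = k"
  shows "R\<^sup>2 / (1 - R\<^sup>2) * ((1 - L\<^sup>2) / L\<^sup>2) \<le> real k \<and>
         real k \<le> (2 * R + L)\<^sup>2 / (1 - R\<^sup>2) * (1 / L\<^sup>2)"
proof
  have z: "cmod z < 1"
    using assms(1) by (simp add: unit_disk_def)
  have "hyp_disk_area R \<le> k * hyp_disk_area L"
    using L_chain_hyp_disk_area_le[OF z _ _ _ _ assms(6,7)] assms(2-5,8) by simp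
  then show "R\<^sup>2 / (1 - R\<^sup>2) * ((1 - L\<^sup>2) / L\<^sup>2) \<le> real k"
    using assms(4,5) by (rule card_lower_bound_arith[rotated 2])
  have "separated L (ph_disk z R) C"
    using assms(6) by (simp add: L_chain_def)
  then have "k * hyp_disk_area (L / 2) \<le> hyp_disk_area (ph_add (L / 2) R)"
    using separated_card_hyp_disk_area_le[OF z _ _ _ _ _ assms(7)] assms(2-5,8) by simp
  then show "real k \<le> (2 * R + L)\<^sup>2 / (1 - R\<^sup>2) * (1 / L\<^sup>2)"
    using assms(2-5) by (intro card_upper_bound_arith) simp_all
qed

end
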